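(* Let $q\in L^1_{\mathrm{loc}}(\mathbb{R})$ be such that $\rho(\tilde D)\neq\emptyset$, let $\theta\in[0,2\pi)$, $\alpha=(\cos\theta,\sin\theta)$, $\beta=\alpha U$. Let $\Theta^{\tilde{\mathscr H}},\Phi^{\tilde{\mathscr H}}$ be the solutions of $\tilde{\mathscr H}\Psi=z\Psi$ with $\Theta^{\tilde{\mathscr H}}(z,0,\alpha)=(\cos\theta,\sin\theta)^\top$, $\Phi^{\tilde{\mathscr H}}(z,0,\alpha)=(-\sin\theta,\cos\theta)^\top$, and let $\Theta^{\tilde{\mathscr D}},\Phi^{\tilde{\mathscr D}}$ be the solutions of $\tilde{\mathscr D}\Psi=z\Psi$ with $\Theta^{\tilde{\mathscr D}}(z,0,\beta)=-\frac{1+i}{2}(e^{i\theta},e^{-i\theta})^\top$, $\Phi^{\tilde{\mathscr D}}(z,0,\beta)=\frac{1-i}{2}(e^{i\theta},-e^{-i\theta})^\top$. For $z\in\rho(\tilde D)\cap\rho(\tilde D_\pm(\beta))$ let $\Psi^{\tilde{\mathscr H}}_\pm=\Theta^{\tilde{\mathscr H}}+m^{\tilde{\mathscr H}}_\pm(z,\alpha)\Phi^{\tilde{\mathscr H}}$ and $\Psi^{\tilde{\mathscr D}}_\pm=\Theta^{\tilde{\mathscr D}}+m^{\tilde{\mathscr D}}_\pm(z,\beta)\Phi^{\tilde{\mathscr D}}$ be the (uniquely normalized) solutions lying in $L^2([0,\pm\infty))^2$. Then for $z\in\rho(\tilde D)\cap\rho(\tilde D_\pm(\beta))=\rho(\tilde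 H)\cap\rho(\tilde H_\pm(\alpha))$ and $x\in\mathbb{R}$, $\Psi^{\tilde{\mathscr D}}_\pm(z,x,\beta)=U^{-1}\Psi^{\tilde{\mathscr H}}_\pm(z,x,\alpha)$, and in particular $m^{\tilde{\mathscr D}}_\pm(z,\beta)=m^{\tilde{\mathscr H}}_\pm(z,\alpha)$.
   Context: $\sigma_3=\begin{pmatrix}1&0\\0&-1\end{pmatrix}$, $\sigma_4=\begin{pmatrix}0&1\\-1&0\end{pmatrix}$, $U=\frac12\begin{pmatrix}-1+i & -1+i\\ 1+i & -1-i\end{pmatrix}$. For complex $q\in L^1_{\mathrm{loc}}(\mathbb{R})$: $\tilde{\mathscr D}=i\sigma_3\frac{d}{dx}+i\begin{pmatrix}0&-q\\ -\overline q&0\end{pmatrix}$, $\tilde{\mathscr H}=U\tilde{\mathscr D}U^{-1}=-\sigma_4\frac{d}{dx}+i\begin{pmatrix}-\operatorname{Re}q & -\operatorname{Im}q\\ -\operatorname{Im}q & \operatorname{Re}q\end{pmatrix}$. $\tilde D$ (resp. $\tilde H$) is the operator in $L^2(\mathbb{R})^2$ acting as $\tilde{\mathscr D}$ (resp. $\tilde{\mathscr H}$) on the maximal domain $\{\Psi\in L^2\cap AC_{\mathrm{loc}}:\text{expression applied to }\Psi\in L^2\}$; $\tilde H=U\tilde DU^{-1}$. The half-line operators $\tilde D_\pm(\beta)$ in $L^2([0,\pm\infty))^2$ act as $\tilde{\mathscr D}$ on $\{\Psi\in L^2([0,\pm\infty))^2\cap AC_{\mathrm{loc}}([0,\pm\infty))^2:\beta\Psi(0)=0,\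 \tilde{\mathscr D}\Psi\in L^2([0,\pm\infty))^2\}$, and $\tilde H_\pm(\alpha)$ analogously with $\tilde{\mathscr H}$ and $\alpha\Psi(0)=0$; $\tilde H_\pm(\alpha)=U\tilde D_\pm(\beta)U^{-1}$. Here $[0,-\infty)$ means $(-\infty,0]$. Known facts used to define the $m$'s: for $z\in\rho(\tilde D)$ the solutions of $\tilde{\mathscr D}\Psi=z\Psi$ in $L^2([0,\pm\infty))^2$ form a one-dimensional space, and for $z$ also in $\rho(\tilde D_\pm(\beta))$ these are not multiples of $\Phi^{\tilde{\mathscr D}}$ (similarly for $\tilde{\mathscr H}$), so the normalized solutions exist uniquely. *)

theory Defs
  imports "HOL-Analysis.Analysis"
begin

type_synonym cvec = "complex ^ 2"
type_synonym cmat = "complex ^ 2 ^ 2"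

definition mat2 :: "complex \<Rightarrow> complex \<Rightarrow> complex \<Rightarrow> complex \<Rightarrow> cmat" where
  "mat2 a b c d = vector [vector [a, b], vector [c, d]]"

definition vec2 :: "complex \<Rightarrow> complex \<Rightarrow> cvec" where
  "vec2 a b = vector [a, b]"

definition sigma3 :: cmat where "sigma3 = mat2 1 0 0 (-1)"
definition sigma4 :: cmat where "sigma4 = mat2 0 1 (-1) 0"
definition Umat :: cmat where
  "Umat = (1/2) *\<^sub>R mat2 (-1 + \<i>) (-1 + \<i>) (1 + \<i>) (-1 - \<i>)"

text \<open>Coefficients: the differential expressions are  A (d/dx) + V(x).\<close>
definition A_D :: cmat where "A_D = (\<chi> i j. \<i> * sigma3 $ i $ j)"
definition V_D :: "(real \<Rightarrow> complex) \<Rightarrow> real \<Rightarrow> cmat" where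
  "V_D q x = (\<chi> i j. \<i> * mat2 0 (- q x) (- cnj (q x)) 0 $ i $ j)"
definition A_H :: cmat where "A_H = - sigma4"
definition V_H :: "(real \<Rightarrow> complex) \<Rightarrow> real \<Rightarrow> cmat" where
  "V_H q x = (\<chi> i j. \<i> * mat2 (- of_real (Re (q x))) (- of_real (Im (q x)))
                               (- of_real (Im (q x))) (of_real (Re (q x))) $ i $ j)"

definition loc_integrable :: "(real \<Rightarrow> complex) \<Rightarrow> bool" where
  "loc_integrable q \<longleftrightarrow> (\<forall>a b. q absolutely_integrable_on {a..b})"

text \<open>ode_rel A V S Psi F: \<Psi> is locally absolutely continuous on the interval S
  (i.e. on every compact subinterval it is the integral of an integrable derivative g)
  and the expression A \<Psi>' + V \<Psi> equals F almost everywhere on S.\<close>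
definition ode_rel :: "cmat \<Rightarrow> (real \<Rightarrow> cmat) \<Rightarrow> real set \<Rightarrow> (real \<Rightarrow> cvec) \<Rightarrow> (real \<Rightarrow> cvec) \<Rightarrow> bool" where
  "ode_rel A V S \<Psi> F \<longleftrightarrow>
     (\<exists>g. (\<forall>a\<in>S. \<forall>b\<in>S. a \<le> b \<longrightarrow>
            g absolutely_integrable_on {a..b} \<and> \<Psi> b - \<Psi> a = integral {a..b} g) \<and>
          (AE x in lborel. x \<in> S \<longrightarrow> F x = A *v g x + V x *v \<Psi> x))"

definition sq_int :: "real set \<Rightarrow> (real \<Rightarrow> cvec) \<Rightarrow> bool" where
  "sq_int S f \<longleftrightarrow> f measurable_on S \<and> (\<lambda>x. (norm (f x))\<^sup>2) integrable_on S"

definition l2norm :: "real set \<Rightarrow> (real \<Rightarrow> cvec) \<Rightarrow> real" where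
  "l2norm S f = sqrt (integral S (\<lambda>x. (norm (f x))\<^sup>2))"

text \<open>Graph of the maximal operator in L^2(S)^2 with boundary condition bc:
  (\<Psi>, F) with \<Psi> in the domain and F = T\<Psi>.\<close>
definition op_graph :: "cmat \<Rightarrow> (real \<Rightarrow> cmat) \<Rightarrow> real set \<Rightarrow> ((real \<Rightarrow> cvec) \<Rightarrow> bool)
    \<Rightarrow> (real \<Rightarrow> cvec) \<Rightarrow> (real \<Rightarrow> cvec) \<Rightarrow> bool" where
  "op_graph A V S bc \<Psi> F \<longleftrightarrow> sq_int S \<Psi> \<and> bc \<Psi> \<and> ode_rel A V S \<Psi> F \<and> sq_int S F"

definition resolvent_set :: "cmat \<Rightarrow> (real \<Rightarrow> cmat) \<Rightarrow> real set \<Rightarrow> ((real \<Rightarrow> cvec) \<Rightarrow> bool)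
    \<Rightarrow> complex set" where
  "resolvent_set A V S bc = {z.
     (\<forall>f. sq_int S f \<longrightarrow> (\<exists>\<Psi> F. op_graph A V S bc \<Psi> F \<and>
          (AE x in lborel. x \<in> S \<longrightarrow> F x - z *s \<Psi> x = f x))) \<and>
     (\<exists>C. \<forall>\<Psi> F. op_graph A V S bc \<Psi> F \<longrightarrow>
          l2norm S \<Psi> \<le> C * l2norm S (\<lambda>x. F x - z *s \<Psi> x))}"

definition no_bc :: "(real \<Rightarrow> cvec) \<Rightarrow> bool" where "no_bc \<Psi> = True"

definition bc0 :: "cvec \<Rightarrow> (real \<Rightarrow> cvec) \<Rightarrow> bool" where
  "bc0 \<gamma> \<Psi> \<longleftrightarrow> (\<Sum>i\<in>UNIV. \<gamma> $ i * \<Psi> 0 $ i) = 0"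

definition weyl_m :: "real set \<Rightarrow> (real \<Rightarrow> cvec) \<Rightarrow> (real \<Rightarrow> cvec) \<Rightarrow> complex" where
  "weyl_m S \<Theta> \<Phi> = (THE m. sq_int S (\<lambda>x. \<Theta> x + m *s \<Phi> x))"

end

theory Submission
  imports Defs
begin

(*
  The unitary matrix U conjugates the Dirac coefficients into the Hamiltonian ones:
  U A_D U^-1 = A_H and U V_D U^-1 = V_H. So Psi |-> U Psi maps solutions of D Psi = z Psi to
  solutions of H Psi = z Psi, turns the boundary condition (alpha U) Psi(0) = 0 into
  alpha Psi(0) = 0 and preserves L^2 norms; the operators are unitarily equivalent and have the
  same resolvent sets. The prescribed initial values satisfy Theta_D(0) = U^-1 Theta_H(0) and
  Phi_D(0) = U^-1 Phi_H(0), so uniqueness for the initial value problem (a Gronwall-type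
  argument: the zero set of a solution is open and closed) gives Theta_D = U^-1 Theta_H and
  Phi_D = U^-1 Phi_H. Hence Theta_D + m Phi_D = U^-1 (Theta_H + m Phi_H) for every m, one side
  is square integrable exactly when the other is, and the Weyl coefficients coincide.
*)

lemma mat2_nth [simp]:
  "mat2 a b c d $ 1 $ 1 = a" "mat2 a b c d $ 1 $ 2 = b"
  "mat2 a b c d $ 2 $ 1 = c" "mat2 a b c d $ 2 $ 2 = d"
  by (simp_all add: mat2_def)

lemma vec2_nth [simp]: "vec2 a b $ 1 = a" "vec2 a b $ 2 = b"
  by (simp_all add: vec2_def)

lemma cmat_eq_iff:
  "(M :: cmat) = N \<longleftrightarrow> M$1$1 = N$1$1 \<and> M$1$2 = N$1$2 \<and> M$2$1 = N$2$1 \<and> M$2$2 = N$2$2"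
  by (auto simp: vec_eq_iff forall_2)

lemma cvec_eq_iff: "(v :: cvec) = w \<longleftrightarrow> v$1 = w$1 \<and> v$2 = w$2"
  by (auto simp: vec_eq_iff forall_2)

lemma norm_cvec: "norm (v :: cvec) = sqrt ((cmod (v$1))\<^sup>2 + (cmod (v$2))\<^sup>2)"
  by (simp add: norm_vec_def L2_set_def sum_2)

lemma matrix_inv_eqI:
  fixes A B :: "'a::comm_ring_1 ^ 'n ^ 'n"
  assumes "A ** B = mat 1" "B ** A = mat 1"
  shows "matrix_inv A = B"
proof -
  have "A ** matrix_inv A = mat 1 \<and> matrix_inv A ** A = mat 1"
    unfolding matrix_inv_def by (rule someI_ex) (use assms in blast)
  then have "matrix_inv A ** A = mat 1" by blast
  have "matrix_inv A = matrix_inv A ** (A ** B)" by (simp add: assms(1))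
  also have "\<dots> = B" by (simp add: matrix_mul_assoc \<open>matrix_inv A ** A = mat 1\<close>)
  finally show ?thesis .
qed

lemma matrix_conj_cancel:
  fixes P Q :: "'a::comm_ring_1 ^ 'n ^ 'n"
  assumes "Q ** P = mat 1"
  shows "Q ** (P ** A ** Q) ** P = A"
proof -
  have "Q ** (P ** A ** Q) ** P = (Q ** P) ** A ** (Q ** P)" by (simp add: matrix_mul_assoc)
  then show ?thesis by (simp add: assms)
qed

definition Uinv :: cmat where
  "Uinv = (1/2) *\<^sub>R mat2 (-1 - \<i>) (1 - \<i>) (-1 - \<i>) (-1 + \<i>)"

lemma Umat_Uinv: "Umat ** Uinv = mat 1" and Uinv_Umat: "Uinv ** Umat = mat 1"
  by (simp_all add: cmat_eq_iff Umat_def Uinv_def matrix_matrix_mult_def sum_2 mat_def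
      complex_eq_iff)

lemma matrix_inv_Umat: "matrix_inv Umat = Uinv"
  by (rule matrix_inv_eqI[OF Umat_Uinv Uinv_Umat])

lemma norm_Umat_mult: "norm (Umat *v v) = norm v"
  by (simp add: norm_cvec Umat_def matrix_vector_mult_def sum_2 cmod_power2)
     (simp add: power2_eq_square field_simps)

lemma A_H_conj: "A_H = Umat ** A_D ** Uinv"
  by (simp add: cmat_eq_iff Umat_def Uinv_def A_H_def A_D_def sigma3_def sigma4_def
      matrix_matrix_mult_def sum_2 complex_eq_iff algebra_simps)

lemma V_H_conj: "V_H q = (\<lambda>x. Umat ** V_D q x ** Uinv)"
  by (simp add: fun_eq_iff cmat_eq_iff Umat_def Uinv_def V_H_def V_D_def
      matrix_matrix_mult_def sum_2 complex_eq_iff algebra_simps)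

lemma norm_A_D_mult: "norm (A_D *v v) = norm v"
  by (simp add: norm_cvec A_D_def sigma3_def matrix_vector_mult_def sum_2 norm_mult)

lemma norm_V_D_mult: "norm (V_D q x *v v) = cmod (q x) * norm v"
  by (simp add: norm_cvec V_D_def matrix_vector_mult_def sum_2 norm_mult power_mult_distrib
      real_sqrt_mult flip: distrib_left)

lemma bc0_vector_matrix_mult: "bc0 (\<alpha> v* M) \<Psi> \<longleftrightarrow> bc0 \<alpha> (\<lambda>x. M *v \<Psi> x)"
  by (simp add: bc0_def sum_2 vector_matrix_mult_def matrix_vector_mult_def algebra_simps)

lemma exp_i_real: "exp (\<i> * complex_of_real t) = of_real (cos t) + \<i> * of_real (sin t)"
  by (simp add: cis_conv_exp[symmetric] complex_eq_iff)

lemma exp_minus_i_real: "exp (- \<i> * complex_of_real t) = of_real (cos t) - \<i> * of_real (sin t)"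
  using exp_i_real[of "-t"] by simp

lemma matrix_vector_mult_scalar: "(P :: cmat) *v (c *s v) = c *s (P *v v)"
  by (simp add: vec_eq_iff matrix_vector_mult_def sum_2 algebra_simps)

lemma ode_rel_conj:
  assumes ode: "ode_rel A V S \<Psi> F" and QP: "Q ** P = mat 1"
  shows "ode_rel (P ** A ** Q) (\<lambda>x. P ** V x ** Q) S (\<lambda>x. P *v \<Psi> x) (\<lambda>x. P *v F x)"
proof -
  obtain g where g: "\<forall>a\<in>S. \<forall>b\<in>S. a \<le> b \<longrightarrow>
      g absolutely_integrable_on {a..b} \<and> \<Psi> b - \<Psi> a = integral {a..b} g"
    and eq: "AE x in lborel. x \<in> S \<longrightarrow> F x = A *v g x + V x *v \<Psi> x"
    using ode unfolding ode_rel_def by blast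
  have lin: "bounded_linear ((*v) P)" by simp
  have conj: "(P ** M ** Q) *v (P *v v) = P *v (M *v v)" for M v
  proof -
    have "(P ** M ** Q) ** P = (P ** M) ** (Q ** P)" by (simp add: matrix_mul_assoc)
    then show ?thesis by (simp add: matrix_vector_mul_assoc QP)
  qed
  show ?thesis unfolding ode_rel_def
  proof (intro exI conjI ballI impI)
    fix a b assume "a \<in> S" "b \<in> S" "a \<le> b"
    then have gi: "g absolutely_integrable_on {a..b}" "\<Psi> b - \<Psi> a = integral {a..b} g"
      using g by blast+
    show "(\<lambda>x. P *v g x) absolutely_integrable_on {a..b}"
      using absolutely_integrable_linear[OF gi(1) lin] by (simp add: o_def)
    have "integral {a..b} ((*v) P \<circ> g) = P *v integral {a..b} g"
      using gi(1) lin by (intro integral_linear) (auto simp: absolutely_integrable_on_def)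
    then show "P *v \<Psi> b - P *v \<Psi> a = integral {a..b} (\<lambda>x. P *v g x)"
      using gi(2) by (simp add: o_def flip: matrix_vector_mult_diff_distrib)
  next
    show "AE x in lborel. x \<in> S \<longrightarrow>
        P *v F x = (P ** A ** Q) *v (P *v g x) + (P ** V x ** Q) *v (P *v \<Psi> x)"
      using eq by eventually_elim (simp add: conj matrix_vector_right_distrib)
  qed
qed

lemma ode_rel_diff:
  assumes "ode_rel A V S \<Psi>\<^sub>1 F\<^sub>1" "ode_rel A V S \<Psi>\<^sub>2 F\<^sub>2"
  shows "ode_rel A V S (\<lambda>x. \<Psi>\<^sub>1 x - \<Psi>\<^sub>2 x) (\<lambda>x. F\<^sub>1 x - F\<^sub>2 x)"
proof -
  obtain g\<^sub>1 where g\<^sub>1: "\<forall>a\<in>S. \<forall>b\<in>S. a \<le> b \<longrightarrow>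
      g\<^sub>1 absolutely_integrable_on {a..b} \<and> \<Psi>\<^sub>1 b - \<Psi>\<^sub>1 a = integral {a..b} g\<^sub>1"
    and eq\<^sub>1: "AE x in lborel. x \<in> S \<longrightarrow> F\<^sub>1 x = A *v g\<^sub>1 x + V x *v \<Psi>\<^sub>1 x"
    using assms(1) unfolding ode_rel_def by blast
  obtain g\<^sub>2 where g\<^sub>2: "\<forall>a\<in>S. \<forall>b\<in>S. a \<le> b \<longrightarrow>
      g\<^sub>2 absolutely_integrable_on {a..b} \<and> \<Psi>\<^sub>2 b - \<Psi>\<^sub>2 a = integral {a..b} g\<^sub>2"
    and eq\<^sub>2: "AE x in lborel. x \<in> S \<longrightarrow> F\<^sub>2 x = A *v g\<^sub>2 x + V x *v \<Psi>\<^sub>2 x"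
    using assms(2) unfolding ode_rel_def by blast
  show ?thesis unfolding ode_rel_def
  proof (intro exI conjI ballI impI)
    fix a b assume "a \<in> S" "b \<in> S" "a \<le> b"
    then have i\<^sub>1: "g\<^sub>1 absolutely_integrable_on {a..b}" "\<Psi>\<^sub>1 b - \<Psi>\<^sub>1 a = integral {a..b} g\<^sub>1"
      and i\<^sub>2: "g\<^sub>2 absolutely_integrable_on {a..b}" "\<Psi>\<^sub>2 b - \<Psi>\<^sub>2 a = integral {a..b} g\<^sub>2"
      using g\<^sub>1 g\<^sub>2 by blast+
    show "(\<lambda>x. g\<^sub>1 x - g\<^sub>2 x) absolutely_integrable_on {a..b}"
      using set_integral_diff(1)[OF i\<^sub>1(1) i\<^sub>2(1)] .
    have "integral {a..b} (\<lambda>x. g\<^sub>1 x - g\<^sub>2 x) = integral {a..b} g\<^sub>1 - integral {a..b} g\<^sub>2"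
      using i\<^sub>1(1) i\<^sub>2(1) by (intro integral_diff) (auto simp: absolutely_integrable_on_def)
    then show "\<Psi>\<^sub>1 b - \<Psi>\<^sub>2 b - (\<Psi>\<^sub>1 a - \<Psi>\<^sub>2 a) = integral {a..b} (\<lambda>x. g\<^sub>1 x - g\<^sub>2 x)"
      using i\<^sub>1(2) i\<^sub>2(2) by (simp add: algebra_simps)
  next
    show "AE x in lborel. x \<in> S \<longrightarrow>
        F\<^sub>1 x - F\<^sub>2 x = A *v (g\<^sub>1 x - g\<^sub>2 x) + V x *v (\<Psi>\<^sub>1 x - \<Psi>\<^sub>2 x)"
      using eq\<^sub>1 eq\<^sub>2 by eventually_elim (simp add: algebra_simps)
  qed
qed

lemma sq_int_isometry:
  assumes "sq_int S f" "\<And>v. norm ((P :: cmat) *v v) = norm v"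
  shows "sq_int S (\<lambda>x. P *v f x)"
proof -
  have "((*v) P \<circ> f) measurable_on S"
    using assms(1) unfolding sq_int_def
    by (intro measurable_on_compose_continuous_0) (auto intro: linear_continuous_on)
  then show ?thesis using assms unfolding sq_int_def by (simp add: o_def)
qed

lemma isometry_right_inverse:
  assumes "(P :: cmat) ** Q = mat 1" "\<And>v. norm (P *v v) = norm v"
  shows "norm (Q *v v) = norm v"
  using assms(2)[of "Q *v v"] by (simp add: matrix_vector_mul_assoc assms(1))

lemma sq_int_unitary_iff:
  assumes "Q ** P = mat 1" "P ** Q = mat 1" "\<And>v. norm ((P :: cmat) *v v) = norm v"
  shows "sq_int S (\<lambda>x. P *v f x) \<longleftrightarrow> sq_int S f"
proof
  assume "sq_int S (\<lambda>x. P *v f x)"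
  from sq_int_isometry[OF this isometry_right_inverse[OF assms(2,3)]]
  show "sq_int S f" by (simp add: matrix_vector_mul_assoc assms(1))
qed (rule sq_int_isometry[OF _ assms(3)])

lemma weyl_m_unitary:
  assumes "Q ** P = mat 1" "P ** Q = mat 1" "\<And>v. norm ((P :: cmat) *v v) = norm v"
  shows "weyl_m S (\<lambda>x. P *v \<Theta> x) (\<lambda>x. P *v \<Phi> x) = weyl_m S \<Theta> \<Phi>"
proof -
  have "(\<lambda>x. P *v \<Theta> x + m *s (P *v \<Phi> x)) = (\<lambda>x. P *v (\<Theta> x + m *s \<Phi> x))" for m
    by (simp add: matrix_vector_right_distrib matrix_vector_mult_scalar)
  then show ?thesis
    unfolding weyl_m_def by (simp add: sq_int_unitary_iff[OF assms])
qed

lemma op_graph_conj: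
  assumes "op_graph A V S bc \<Psi> F" "Q ** P = mat 1" "\<And>v. norm ((P :: cmat) *v v) = norm v"
    and "\<And>\<Psi>. bc \<Psi> \<Longrightarrow> bc' (\<lambda>x. P *v \<Psi> x)"
  shows "op_graph (P ** A ** Q) (\<lambda>x. P ** V x ** Q) S bc' (\<lambda>x. P *v \<Psi> x) (\<lambda>x. P *v F x)"
  using assms ode_rel_conj[of A V S \<Psi> F Q P] sq_int_isometry[of S _ P]
  unfolding op_graph_def by blast

lemma resolvent_set_conj_subset:
  assumes QP: "Q ** P = mat 1" and PQ: "P ** Q = mat 1"
    and iso: "\<And>v. norm ((P :: cmat) *v v) = norm v"
    and bc: "\<And>\<Psi>. bc \<Psi> \<longleftrightarrow> bc' (\<lambda>x. P *v \<Psi> x)"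
  shows "resolvent_set A V S bc \<subseteq> resolvent_set (P ** A ** Q) (\<lambda>x. P ** V x ** Q) S bc'"
proof
  fix z assume z: "z \<in> resolvent_set A V S bc"
  let ?A' = "P ** A ** Q" and ?V' = "\<lambda>x. P ** V x ** Q"
  have iso': "norm (Q *v v) = norm v" for v by (rule isometry_right_inverse[OF PQ iso])
  have bc': "bc (\<lambda>x. Q *v \<Psi> x)" if "bc' \<Psi>" for \<Psi>
    using that by (simp add: bc matrix_vector_mul_assoc PQ)
  have to_graph: "op_graph ?A' ?V' S bc' (\<lambda>x. P *v \<Psi> x) (\<lambda>x. P *v F x)"
    if "op_graph A V S bc \<Psi> F" for \<Psi> F
    using op_graph_conj[OF that QP iso] bc by blast
  have from_graph: "op_graph A V S bc (\<lambda>x. Q *v \<Psi> x) (\<lambda>x. Q *v F x)"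
    if "op_graph ?A' ?V' S bc' \<Psi> F" for \<Psi> F
    using op_graph_conj[where P = Q and Q = P and bc' = bc, OF that PQ iso' bc']
    by (simp add: matrix_conj_cancel[OF QP])
  have shift: "(M :: cmat) *v F x - z *s (M *v \<Psi> x) = M *v (F x - z *s \<Psi> x)" for M F \<Psi> x
    by (simp add: matrix_vector_mult_diff_distrib matrix_vector_mult_scalar)
  from z obtain C where
    onto: "\<And>f. sq_int S f \<Longrightarrow> \<exists>\<Psi> F. op_graph A V S bc \<Psi> F \<and>
        (AE x in lborel. x \<in> S \<longrightarrow> F x - z *s \<Psi> x = f x)"
    and bound: "\<And>\<Psi> F. op_graph A V S bc \<Psi> F \<Longrightarrow>
        l2norm S \<Psi> \<le> C * l2norm S (\<lambda>x. F x - z *s \<Psi> x)"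
    unfolding resolvent_set_def by blast
  show "z \<in> resolvent_set ?A' ?V' S bc'" unfolding resolvent_set_def
  proof (intro CollectI conjI allI impI exI[of _ C])
    fix f assume "sq_int S f"
    then obtain \<Psi> F where graph: "op_graph A V S bc \<Psi> F"
      and solves: "AE x in lborel. x \<in> S \<longrightarrow> F x - z *s \<Psi> x = Q *v f x"
      using onto[OF sq_int_isometry[OF _ iso']] by blast
    from solves have "AE x in lborel. x \<in> S \<longrightarrow> P *v F x - z *s (P *v \<Psi> x) = f x"
      by eventually_elim (simp add: shift matrix_vector_mul_assoc PQ)
    then show "\<exists>\<Psi> F. op_graph ?A' ?V' S bc' \<Psi> F \<and>
        (AE x in lborel. x \<in> S \<longrightarrow> F x - z *s \<Psi> x = f x)"
      using to_graph[OF graph] by blast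
  next
    fix \<Psi> F assume "op_graph ?A' ?V' S bc' \<Psi> F"
    from bound[OF from_graph[OF this]]
    show "l2norm S \<Psi> \<le> C * l2norm S (\<lambda>x. F x - z *s \<Psi> x)"
      by (simp add: shift l2norm_def iso')
  qed
qed

lemma resolvent_set_conj:
  assumes QP: "Q ** P = mat 1" and PQ: "P ** Q = mat 1"
    and iso: "\<And>v. norm ((P :: cmat) *v v) = norm v"
    and bc: "\<And>\<Psi>. bc \<Psi> \<longleftrightarrow> bc' (\<lambda>x. P *v \<Psi> x)"
  shows "resolvent_set (P ** A ** Q) (\<lambda>x. P ** V x ** Q) S bc' = resolvent_set A V S bc"
proof
  have bc': "bc' \<Psi> \<longleftrightarrow> bc (\<lambda>x. Q *v \<Psi> x)" for \<Psi>
    by (simp add: bc matrix_vector_mul_assoc PQ)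
  from resolvent_set_conj_subset[where P = Q and Q = P and bc = bc' and bc' = bc,
      OF PQ QP isometry_right_inverse[OF PQ iso] bc', of "P ** A ** Q" "\<lambda>x. P ** V x ** Q" S]
  show "resolvent_set (P ** A ** Q) (\<lambda>x. P ** V x ** Q) S bc' \<subseteq> resolvent_set A V S bc"
    by (simp add: matrix_conj_cancel[OF QP])
qed (rule resolvent_set_conj_subset[where bc = bc and bc' = bc', OF assms])

lemma AE_lborel_negligibleE:
  assumes "AE x in lborel. P x"
  obtains N where "negligible N" "\<And>x. x \<notin> N \<Longrightarrow> P x"
proof -
  from assms obtain N where N: "{x \<in> space lborel. \<not> P x} \<subseteq> N" "N \<in> null_sets lborel"
    by (auto elim!: AE_E simp: null_setsI)
  from N(2) have "negligible N"
    unfolding negligible_iff_null_sets by (rule null_sets_completionI)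
  with N(1) show ?thesis using that by auto
qed

lemma continuous_on_antiderivative:
  fixes g Y :: "real \<Rightarrow> 'a::euclidean_space"
  assumes "\<And>a b. a \<le> b \<Longrightarrow> g integrable_on {a..b} \<and> Y b - Y a = integral {a..b} g"
  shows "continuous_on UNIV Y"
proof (rule continuous_at_imp_continuous_on, intro ballI)
  fix x :: real
  have "continuous_on {x-1..x+1} (\<lambda>t. integral {x-1..t} g)"
    by (rule indefinite_integral_continuous_1) (use assms[of "x-1" "x+1"] in simp)
  then have "continuous_on {x-1..x+1} (\<lambda>t. Y (x-1) + integral {x-1..t} g)"
    by (intro continuous_intros)
  moreover have "Y (x-1) + integral {x-1..t} g = Y t" if "t \<in> {x-1..x+1}" for t
    using assms[of "x-1" t] that by (simp add: algebra_simps)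
  ultimately have "continuous_on {x-1..x+1} Y" by (rule continuous_on_eq)
  then show "isCont Y x" by (rule continuous_on_interior) simp
qed

lemma integral_small_interval_le:
  fixes k :: "real \<Rightarrow> real"
  assumes k: "\<And>a b. k integrable_on {a..b}" and "e > 0"
  shows "\<exists>d>0. integral {c-d..c+d} k \<le> e"
proof -
  define h where "h t = integral {c-1..t} k" for t
  have "continuous_on {c-1..c+1} h" unfolding h_def
    by (rule indefinite_integral_continuous_1) (rule k)
  then have "isCont h c" by (rule continuous_on_interior) simp
  moreover have "e/2 > 0" using \<open>e > 0\<close> by simp
  ultimately obtain d' where d': "d' > 0" "\<And>t. dist t c < d' \<Longrightarrow> dist (h t) (h c) < e/2"
    unfolding continuous_at_eps_delta by blast
  define d where "d = min (d'/2) 1"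
  have d: "0 < d" "d < d'" "d \<le> 1" using d' by (auto simp: d_def)
  have "integral {c-1..c-d} k + integral {c-d..c+d} k = integral {c-1..c+d} k"
    using d by (intro Henstock_Kurzweil_Integration.integral_combine k) auto
  then have "h (c-d) + integral {c-d..c+d} k = h (c+d)" by (simp add: h_def)
  moreover have "dist (h (c+d)) (h c) < e/2" "dist (h (c-d)) (h c) < e/2"
    using d'(2)[of "c+d"] d'(2)[of "c-d"] d by (auto simp: dist_real_def)
  ultimately have "integral {c-d..c+d} k \<le> e" unfolding dist_real_def by linarith
  with d show ?thesis by blast
qed

lemma integral_norm_le_dominated:
  fixes g Y :: "real \<Rightarrow> 'a::euclidean_space"
  assumes N: "negligible N" "\<And>x. x \<notin> N \<Longrightarrow> norm (g x) \<le> k x * norm (Y x)"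
    and g: "g integrable_on {a..b}" and k: "k integrable_on {a..b}" "\<And>t. 0 \<le> k t"
    and M: "\<And>t. t \<in> {a..b} \<Longrightarrow> norm (Y t) \<le> M"
  shows "norm (integral {a..b} g) \<le> M * integral {a..b} k"
proof -
  define g' where "g' t = (if t \<in> N then 0 else g t)" for t
  have "integral {a..b} g = integral {a..b} g'"
    by (rule integral_spike[OF N(1)]) (auto simp: g'_def)
  also have "norm \<dots> \<le> integral {a..b} (\<lambda>t. M * k t)"
  proof (rule Henstock_Kurzweil_Integration.integral_norm_bound_integral)
    show "g' integrable_on {a..b}"
      by (rule integrable_spike[OF g N(1)]) (simp add: g'_def)
    show "(\<lambda>t. M * k t) integrable_on {a..b}"
      using integrable_cmul[OF k(1), of M] by simp
    fix t assume t: "t \<in> {a..b}"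
    have "0 \<le> M" using norm_ge_zero M[OF t] by (rule order_trans)
    have "norm (g t) \<le> k t * M" if "t \<notin> N"
      using N(2)[OF that] mult_left_mono[OF M[OF t] k(2)] by (rule order_trans)
    with \<open>0 \<le> M\<close> k(2)[of t] show "norm (g' t) \<le> M * k t"
      by (simp add: g'_def mult.commute)
  qed
  finally show ?thesis by simp
qed

lemma antiderivative_vanishes_near_zero:
  fixes g Y :: "real \<Rightarrow> 'a::euclidean_space"
  assumes Y: "\<And>a b. a \<le> b \<Longrightarrow> g integrable_on {a..b} \<and> Y b - Y a = integral {a..b} g"
    and k: "\<And>a b. k integrable_on {a..b}" "\<And>t. 0 \<le> k t"
    and N: "negligible N" "\<And>x. x \<notin> N \<Longrightarrow> norm (g x) \<le> k x * norm (Y x)"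
    and "Y c = 0"
  shows "\<exists>d>0. \<forall>t\<in>ball c d. Y t = 0"
proof -
  obtain d where d: "d > 0" "integral {c-d..c+d} k \<le> 1/2"
    using integral_small_interval_le[OF k(1)] by (meson half_gt_zero zero_less_one)
  \<comment> \<open>The maximum M of norm Y on I satisfies M \<le> M * (integral of k over I) \<le> M / 2.\<close>
  define I where "I = {c-d..c+d}"
  have "continuous_on I (\<lambda>t. norm (Y t))"
    using continuous_on_antiderivative[OF Y] by (intro continuous_intros) (auto intro: continuous_on_subset)
  moreover have "compact I" "I \<noteq> {}" using d by (auto simp: I_def)
  ultimately obtain s where s: "s \<in> I" and M: "\<And>t. t \<in> I \<Longrightarrow> norm (Y t) \<le> norm (Y s)"
    using continuous_attains_sup[of I "\<lambda>t. norm (Y t)"] by auto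
  have sub: "{min c s..max c s} \<subseteq> I" using s d(1) by (auto simp: I_def)
  have "norm (Y s) = norm (integral {min c s..max c s} g)"
    using Y[of c s] Y[of s c] \<open>Y c = 0\<close>
    by (cases "c \<le> s") (auto simp: min_def max_def, metis norm_minus_cancel)
  also have "\<dots> \<le> norm (Y s) * integral {min c s..max c s} k"
  proof (rule integral_norm_le_dominated[OF N _ k])
    show "g integrable_on {min c s..max c s}" using Y[of "min c s" "max c s"] by simp
    show "norm (Y t) \<le> norm (Y s)" if "t \<in> {min c s..max c s}" for t
      using M sub that by blast
  qed
  also have "\<dots> \<le> norm (Y s) * (1/2)"
  proof (rule mult_left_mono)
    have "integral {min c s..max c s} k \<le> integral I k"
      using sub k unfolding I_def by (intro integral_subset_le) auto
    then show "integral {min c s..max c s} k \<le> 1/2" using d(2) by (simp add: I_def)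
  qed simp
  finally have "norm (Y s) = 0" by simp
  then have "\<And>t. t \<in> I \<Longrightarrow> Y t = 0" using M by (metis norm_le_zero_iff)
  moreover have "ball c d \<subseteq> I" by (auto simp: I_def dist_real_def)
  ultimately show ?thesis using d(1) by blast
qed

lemma antiderivative_dominated_zero:
  fixes g Y :: "real \<Rightarrow> 'a::euclidean_space"
  assumes Y: "\<And>a b. a \<le> b \<Longrightarrow> g integrable_on {a..b} \<and> Y b - Y a = integral {a..b} g"
    and k: "\<And>a b. k integrable_on {a..b}" "\<And>t. 0 \<le> k t"
    and dominated: "AE x in lborel. norm (g x) \<le> k x * norm (Y x)"
    and "Y x\<^sub>0 = 0"
  shows "Y x = 0"
proof -
  obtain N where N: "negligible N" "\<And>x. x \<notin> N \<Longrightarrow> norm (g x) \<le> k x * norm (Y x)"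
    using AE_lborel_negligibleE[OF dominated] by blast
  let ?Z = "{x. Y x = 0}"
  have "closed ?Z"
    using continuous_on_antiderivative[OF Y] by (intro closed_Collect_eq) auto
  moreover have "open ?Z"
    unfolding open_contains_ball
  proof
    fix c assume "c \<in> ?Z"
    then obtain d where "d > 0" "\<forall>t\<in>ball c d. Y t = 0"
      using antiderivative_vanishes_near_zero[OF Y k N] by blast
    then show "\<exists>d>0. ball c d \<subseteq> ?Z" by blast
  qed
  moreover have "?Z \<noteq> {}" using \<open>Y x\<^sub>0 = 0\<close> by blast
  ultimately have "?Z = UNIV" using clopen[of ?Z] by blast
  then show ?thesis by blast
qed

lemma norm_cvec_scale: "norm (c *s (v :: cvec)) = cmod c * norm v"
  by (simp add: norm_cvec norm_mult power_mult_distrib real_sqrt_mult flip: distrib_left)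

lemma Dirac_derivative_bound:
  assumes "z *s Y = A_D *v g + V_D q x *v Y"
  shows "norm g \<le> (cmod z + cmod (q x)) * norm Y"
proof -
  have "norm g = norm (A_D *v g)" by (simp add: norm_A_D_mult)
  also have "A_D *v g = z *s Y - V_D q x *v Y" using assms by (simp add: algebra_simps)
  also have "norm \<dots> \<le> norm (z *s Y) + norm (V_D q x *v Y)" by (rule norm_triangle_ineq4)
  also have "\<dots> = (cmod z + cmod (q x)) * norm Y"
    by (simp add: norm_cvec_scale norm_V_D_mult algebra_simps)
  finally show ?thesis .
qed

lemma Dirac_solution_zero:
  assumes q: "loc_integrable q" and Y: "ode_rel A_D (V_D q) UNIV Y (\<lambda>x. z *s Y x)"
    and "Y 0 = 0"
  shows "Y x = 0"
proof -
  obtain g where g: "\<And>a b. a \<le> b \<Longrightarrow>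
      g absolutely_integrable_on {a..b} \<and> Y b - Y a = integral {a..b} g"
    and eq: "AE x in lborel. z *s Y x = A_D *v g x + V_D q x *v Y x"
    using Y unfolding ode_rel_def by auto
  have "(\<lambda>t. cmod (q t)) integrable_on {a..b}" for a b
    using q unfolding loc_integrable_def absolutely_integrable_on_def by blast
  then have k: "(\<lambda>t. cmod z + cmod (q t)) integrable_on {a..b}" for a b
    by (intro integrable_add) auto
  show ?thesis
  proof (rule antiderivative_dominated_zero[where g = g and Y = Y, OF _ k _ _ \<open>Y 0 = 0\<close>])
    show "g integrable_on {a..b} \<and> Y b - Y a = integral {a..b} g" if "a \<le> b" for a b
      using g[OF that] by (auto simp: absolutely_integrable_on_def)
    show "AE x in lborel. norm (g x) \<le> (cmod z + cmod (q x)) * norm (Y x)"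
      using eq by eventually_elim (rule Dirac_derivative_bound)
  qed simp
qed

lemma Dirac_solution_unique:
  assumes q: "loc_integrable q"
    and "ode_rel A_D (V_D q) UNIV \<Psi>\<^sub>1 (\<lambda>x. z *s \<Psi>\<^sub>1 x)"
    and "ode_rel A_D (V_D q) UNIV \<Psi>\<^sub>2 (\<lambda>x. z *s \<Psi>\<^sub>2 x)"
    and "\<Psi>\<^sub>1 0 = \<Psi>\<^sub>2 0"
  shows "\<Psi>\<^sub>1 = \<Psi>\<^sub>2"
proof
  fix x
  have "ode_rel A_D (V_D q) UNIV (\<lambda>x. \<Psi>\<^sub>1 x - \<Psi>\<^sub>2 x) (\<lambda>x. z *s (\<Psi>\<^sub>1 x - \<Psi>\<^sub>2 x))"
    using ode_rel_diff[OF assms(2,3)] by (simp add: vector_ssub_ldistrib)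
  from Dirac_solution_zero[OF q this] show "\<Psi>\<^sub>1 x = \<Psi>\<^sub>2 x" using assms(4) by simp
qed

lemma Dirac_solution_of_Hamilton_solution:
  assumes "ode_rel A_H (V_H q) UNIV \<Theta> (\<lambda>x. z *s \<Theta> x)"
  shows "ode_rel A_D (V_D q) UNIV (\<lambda>x. Uinv *v \<Theta> x) (\<lambda>x. z *s (Uinv *v \<Theta> x))"
  using ode_rel_conj[OF assms Umat_Uinv]
  by (simp add: A_H_conj V_H_conj matrix_conj_cancel[OF Uinv_Umat] matrix_vector_mult_scalar)

lemma resolvent_set_Hamilton_Dirac:
  assumes "\<And>\<Psi>. bc \<Psi> \<longleftrightarrow> bc' (\<lambda>x. Umat *v \<Psi> x)"
  shows "resolvent_set A_H (V_H q) S bc' = resolvent_set A_D (V_D q) S bc"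
  unfolding A_H_conj V_H_conj by (rule resolvent_set_conj[where bc = bc and bc' = bc', OF Uinv_Umat Umat_Uinv norm_Umat_mult assms])

theorem lemma4p4:
  fixes q :: "real \<Rightarrow> complex" and \<theta> :: real and z :: complex and S :: "real set"
    and ThH PhH ThD PhD :: "real \<Rightarrow> complex ^ 2"
  assumes q_loc: "loc_integrable q"
    and rho_ne: "resolvent_set A_D (V_D q) UNIV no_bc \<noteq> {}"
    and theta: "0 \<le> \<theta>" "\<theta> < 2 * pi"
    and halfline: "S = {0..} \<or> S = {..0}"
    and ThH: "ode_rel A_H (V_H q) UNIV ThH (\<lambda>x. z *s ThH x)"
             "ThH 0 = vec2 (cos \<theta>) (sin \<theta>)"
    and PhH: "ode_rel A_H (V_H q) UNIV PhH (\<lambda>x. z *s PhH x)"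
             "PhH 0 = vec2 (- sin \<theta>) (cos \<theta>)"
    and ThD: "ode_rel A_D (V_D q) UNIV ThD (\<lambda>x. z *s ThD x)"
             "ThD 0 = (- (1 + \<i>) / 2) *s vec2 (exp (\<i> * \<theta>)) (exp (- \<i> * \<theta>))"
    and PhD: "ode_rel A_D (V_D q) UNIV PhD (\<lambda>x. z *s PhD x)"
             "PhD 0 = ((1 - \<i>) / 2) *s vec2 (exp (\<i> * \<theta>)) (- exp (- \<i> * \<theta>))"
    and z: "z \<in> resolvent_set A_D (V_D q) UNIV no_bc \<inter>
              resolvent_set A_D (V_D q) S (bc0 (vec2 (cos \<theta>) (sin \<theta>) v* Umat))"
  shows "resolvent_set A_D (V_D q) UNIV no_bc \<inter>
           resolvent_set A_D (V_D q) S (bc0 (vec2 (cos \<theta>) (sin \<theta>) v* Umat))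
         = resolvent_set A_H (V_H q) UNIV no_bc \<inter>
           resolvent_set A_H (V_H q) S (bc0 (vec2 (cos \<theta>) (sin \<theta>)))
       \<and> (\<forall>x. ThD x + weyl_m S ThD PhD *s PhD x
              = matrix_inv Umat *v (ThH x + weyl_m S ThH PhH *s PhH x))
       \<and> weyl_m S ThD PhD = weyl_m S ThH PhH"
proof -
  have "ThD 0 = Uinv *v ThH 0" "PhD 0 = Uinv *v PhH 0"
    unfolding ThD(2) ThH(2) PhD(2) PhH(2) exp_i_real exp_minus_i_real
    by (simp_all add: cvec_eq_iff Uinv_def matrix_vector_mult_def sum_2 complex_eq_iff
        algebra_simps)
  then have "ThD = (\<lambda>x. Uinv *v ThH x)" "PhD = (\<lambda>x. Uinv *v PhH x)"
    using Dirac_solution_unique[OF q_loc ThD(1) Dirac_solution_of_Hamilton_solution[OF ThH(1)]]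
      Dirac_solution_unique[OF q_loc PhD(1) Dirac_solution_of_Hamilton_solution[OF PhH(1)]]
    by simp_all
  then have solutions: "ThD x + m *s PhD x = Uinv *v (ThH x + m *s PhH x)" for x m
    by (simp add: matrix_vector_right_distrib matrix_vector_mult_scalar)
  have weyl: "weyl_m S ThD PhD = weyl_m S ThH PhH"
    using weyl_m_unitary[OF Umat_Uinv Uinv_Umat isometry_right_inverse[OF Umat_Uinv norm_Umat_mult]]
      \<open>ThD = _\<close> \<open>PhD = _\<close> by simp
  have "resolvent_set A_H (V_H q) UNIV no_bc = resolvent_set A_D (V_D q) UNIV no_bc"
    by (rule resolvent_set_Hamilton_Dirac) (simp add: no_bc_def)
  moreover have "resolvent_set A_H (V_H q) S (bc0 (vec2 (cos \<theta>) (sin \<theta>)))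
      = resolvent_set A_D (V_D q) S (bc0 (vec2 (cos \<theta>) (sin \<theta>) v* Umat))"
    by (rule resolvent_set_Hamilton_Dirac) (rule bc0_vector_matrix_mult)
  ultimately show ?thesis using solutions weyl matrix_inv_Umat by simp
qed

end
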